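(* Let $n>2k$, $k\ge t+3$, and let $\mathcal F\subseteq\binom{[n]}{k}$ be a maximal $t$-intersecting family with $\tau_t(\mathcal F)=t+2$. Suppose there is $T\in\binom{[n]}{t}$ contained in every member of $\mathcal T_t(\mathcal F)$. Then $$|\mathcal T_t(\mathcal F)|\le (k-t)(k-t+1)+1.$$ Moreover, if equality holds, then $\mathcal F\setminus\mathcal F_T=\{G_1,G_2,G_3\}$ with $G_1=A\cup B$, $G_2=A\cup C$, $G_3=(T\cap A)\cup B\cup\{u\}$, where $u\in C$ and $A,B,C$ are pairwise disjoint subsets of $[n]$ with $|A|=t$, $|B|=|C|=k-t$, $|T\cap A|=t-1$ and $T\cap(B\cup C)=\emptyset$.
   Context: A family is $t$-intersecting if any two members meet in at least $t$ elements. A $t$-cover of a family $\mathcal F$ is a set $S\subseteq[n]$ with $|S\cap F|\ge t$ for all $F\in\mathcal F$; $\tau_t(\mathcal F)$ is the minimum size of a $t$-cover, and $\mathcal T_t(\mathcal F)$ denotes the set of all $t$-covers of $\mathcal F$ of size $\tau_t(\mathcal F)$. A $t$-intersecting family $\mathcal F\subseteq\binom{[n]}{k}$ is maximal if no $t$-intersecting subfamily of $\binom{[n]}{k}$ properly contains it. For $A\subseteq[n]$, $\mathcal F_A=\{F\in\mathcal F: A\subseteq F\}$. *)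

theory Defs
  imports Main
begin

definition k_subsets :: "nat \<Rightarrow> nat \<Rightarrow> nat set set" where
  "k_subsets n k = {F. F \<subseteq> {1..n} \<and> card F = k}"

definition t_intersecting :: "nat \<Rightarrow> nat set set \<Rightarrow> bool" where
  "t_intersecting t \<F> \<longleftrightarrow> (\<forall>A\<in>\<F>. \<forall>B\<in>\<F>. t \<le> card (A \<inter> B))"

definition t_cover :: "nat \<Rightarrow> nat \<Rightarrow> nat set set \<Rightarrow> nat set \<Rightarrow> bool" where
  "t_cover n t \<F> S \<longleftrightarrow> S \<subseteq> {1..n} \<and> (\<forall>F\<in>\<F>. t \<le> card (S \<inter> F))"

definition tau :: "nat \<Rightarrow> nat \<Rightarrow> nat set set \<Rightarrow> nat" where
  "tau n t \<F> = (LEAST s. \<exists>S. t_cover n t \<F> S \<and> card S = s)"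

definition min_covers :: "nat \<Rightarrow> nat \<Rightarrow> nat set set \<Rightarrow> nat set set" where
  "min_covers n t \<F> = {S. t_cover n t \<F> S \<and> card S = tau n t \<F>}"

definition maximal_t_intersecting :: "nat \<Rightarrow> nat \<Rightarrow> nat \<Rightarrow> nat set set \<Rightarrow> bool" where
  "maximal_t_intersecting n k t \<F> \<longleftrightarrow>
     \<F> \<subseteq> k_subsets n k \<and> t_intersecting t \<F> \<and>
     (\<forall>\<G>. \<F> \<subset> \<G> \<and> \<G> \<subseteq> k_subsets n k \<longrightarrow> \<not> t_intersecting t \<G>)"

definition star :: "nat set set \<Rightarrow> nat set \<Rightarrow> nat set set" where
  "star \<F> A = {F \<in> \<F>. A \<subseteq> F}"

end

theory Submission
  imports Defs
begin

(* Write G for F - F_T. A minimum t-cover S contains T and has t + 2 elements, so S is determined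
   by the pair S - T. If some member of G meets T in at most t - 2 elements, every such pair lies
   in G - T, a set of at most k - t + 2 elements, and there are fewer than (k-t)(k-t+1) + 1 such
   pairs. Otherwise every member of G meets T in exactly t - 1 elements. Then the traces G - T
   form an intersecting family of (k-t+1)-sets without a common element (a common element x
   would make T + x a t-cover of size t + 1), and every pair S - T meets every trace.
   For two traces X1, X2 with i = |X1 Int X2| >= 1 and j = |X1 - X2| >= 1, such a 2-transversal
   either contains a point x of X1 Int X2 and a point of a trace missing x, or a point of each of
   X1 - X2 and X2 - X1; so there are at most i(k-t+1) + j^2 = (k-t)(k-t+1) + 1 - (i-1)(j-1)
   of them. In the case of equality every two traces have i = 1 or j = 1; j = 1 throughout
   confines all transversals to a (k-t+2)-set, and i = 1 with both counts tight forces the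
   traces to be {p} + B, {p} + C, {u} + B. These three traces pin down a common (t-1)-subset
   of T inside all members of G. *)

lemma card_two_subsets_lt:
  fixes m :: nat
  assumes "finite Y" "card Y \<le> m + 2" "2 \<le> m" "\<P> \<subseteq> {Q. Q \<subseteq> Y \<and> card Q = 2}"
  shows "card \<P> < m * (m + 1) + 1"
proof -
  have "card \<P> \<le> card {Q. Q \<subseteq> Y \<and> card Q = 2}"
    using assms by (intro card_mono) auto
  also have "\<dots> = card Y * (card Y - 1) div 2"
    using assms(1) by (simp add: n_subsets choose_two)
  also have "\<dots> \<le> (m + 2) * (m + 1) div 2"
    using assms(2) by (intro div_le_mono mult_le_mono) auto
  also have "\<dots> < m * (m + 1) + 1"
  proof -
    obtain q where "m = q + 2" using assms(3) by (metis add.commute le_Suc_ex)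
    then show ?thesis by (simp add: algebra_simps)
  qed
  finally show ?thesis .
qed

lemma card_2_eqI:
  assumes "card Q = 2" "x \<in> Q" "y \<in> Q" "x \<noteq> y"
  shows "Q = {x, y}"
proof -
  have "finite Q" using assms(1) by (intro card_ge_0_finite) simp
  then show ?thesis
    using card_seteq[of Q "{x, y}"] assms by auto
qed

definition pair_transversals :: "'a set set \<Rightarrow> 'a set set" where
  "pair_transversals \<X> = {Q. card Q = 2 \<and> (\<forall>X\<in>\<X>. Q \<inter> X \<noteq> {})}"

locale uniform_intersecting_family =
  fixes \<X> :: "'a set set" and m :: nat
  assumes card_member: "X \<in> \<X> \<Longrightarrow> card X = m + 1"
    and intersecting: "X \<in> \<X> \<Longrightarrow> Y \<in> \<X> \<Longrightarrow> X \<inter> Y \<noteq> {}"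
    and Inter_empty: "\<Inter>\<X> = {}"
begin

abbreviation "\<T> \<equiv> pair_transversals \<X>"

lemma finite_member: "X \<in> \<X> \<Longrightarrow> finite X"
  using card_member by (intro card_ge_0_finite) simp

lemma exists_member_avoiding: "\<exists>X\<in>\<X>. x \<notin> X"
proof -
  have "x \<notin> \<Inter>\<X>" using Inter_empty by simp
  then show ?thesis by (simp add: Inter_iff)
qed

lemma exists_two_members: "\<exists>X1\<in>\<X>. \<exists>X2\<in>\<X>. X1 \<noteq> X2"
proof -
  obtain X1 where X1: "X1 \<in> \<X>" using exists_member_avoiding by blast
  have "X1 \<noteq> {}" using card_member[OF X1] by auto
  then obtain x where "x \<in> X1" by blast
  moreover obtain X2 where "X2 \<in> \<X>" "x \<notin> X2" using exists_member_avoiding by blast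
  ultimately show ?thesis using X1 by blast
qed

lemma member_subset_imp_eq:
  assumes "X \<in> \<X>" "Y \<in> \<X>" "X \<subseteq> Y"
  shows "X = Y"
  using card_seteq[OF finite_member[OF assms(2)] assms(3)] card_member assms(1,2) by simp

lemma pair_transversal_eq:
  assumes "Q \<in> \<T>" "x \<in> Q" "X \<in> \<X>" "x \<notin> X"
  obtains y where "y \<in> X" "Q = {x, y}"
proof -
  obtain y where y: "y \<in> Q" "y \<in> X"
    using assms(1,3) unfolding pair_transversals_def by blast
  have "card Q = 2" using assms(1) unfolding pair_transversals_def by simp
  then have "Q = {x, y}" by (rule card_2_eqI) (use y assms(2,4) in auto)
  with y(2) show ?thesis by (rule that)
qed

lemma pair_transversals_through_subset:
  assumes "X \<in> \<X>" "x \<notin> X"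
  shows "{Q \<in> \<T>. x \<in> Q} \<subseteq> (\<lambda>y. {x, y}) ` X"
proof
  fix Q assume "Q \<in> {Q \<in> \<T>. x \<in> Q}"
  then have "Q \<in> \<T>" "x \<in> Q" by simp_all
  then obtain y where "y \<in> X" "Q = {x, y}"
    by (rule pair_transversal_eq[OF _ _ assms])
  then show "Q \<in> (\<lambda>y. {x, y}) ` X" by blast
qed

lemma card_pair_transversals_through_le:
  "finite {Q \<in> \<T>. x \<in> Q} \<and> card {Q \<in> \<T>. x \<in> Q} \<le> m + 1"
proof -
  obtain X where X: "X \<in> \<X>" "x \<notin> X" using exists_member_avoiding by blast
  have fin: "finite ((\<lambda>y. {x, y}) ` X)" using finite_member[OF X(1)] by simp
  have sub: "{Q \<in> \<T>. x \<in> Q} \<subseteq> (\<lambda>y. {x, y}) ` X" by (rule pair_transversals_through_subset[OF X])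
  have "card ((\<lambda>y. {x, y}) ` X) \<le> m + 1"
    using card_image_le[OF finite_member[OF X(1)]] card_member[OF X(1)] by simp
  then show ?thesis using finite_subset[OF sub fin] card_mono[OF fin sub] by simp
qed

lemma pair_transversals_avoiding_subset:
  assumes "X1 \<in> \<X>" "X2 \<in> \<X>"
  shows "{Q \<in> \<T>. Q \<inter> (X1 \<inter> X2) = {}} \<subseteq> (\<lambda>(x, y). {x, y}) ` ((X1 - X2) \<times> (X2 - X1))"
proof
  fix Q assume "Q \<in> {Q \<in> \<T>. Q \<inter> (X1 \<inter> X2) = {}}"
  then have Q: "Q \<in> \<T>" "Q \<inter> (X1 \<inter> X2) = {}" by simp_all
  have "Q \<inter> X1 \<noteq> {}" "Q \<inter> X2 \<noteq> {}"
    using Q(1) assms unfolding pair_transversals_def by auto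
  then obtain x y where x: "x \<in> Q" "x \<in> X1" and y: "y \<in> Q" "y \<in> X2" by blast
  have xy: "x \<notin> X2" "y \<notin> X1" using Q(2) x y by blast+
  have "card Q = 2" using Q(1) unfolding pair_transversals_def by simp
  then have "Q = {x, y}" by (rule card_2_eqI) (use x y xy in auto)
  then show "Q \<in> (\<lambda>(x, y). {x, y}) ` ((X1 - X2) \<times> (X2 - X1))"
    using x y xy by (intro image_eqI[of _ _ "(x, y)"]) auto
qed

lemma card_pair_transversals_le_Int_Diff:
  assumes X1: "X1 \<in> \<X>" and X2: "X2 \<in> \<X>"
  shows "finite \<T> \<and> card \<T> \<le> card (X1 \<inter> X2) * (m + 1) + card (X1 - X2) * card (X2 - X1)"
proof -
  let ?I = "X1 \<inter> X2"
  let ?through = "\<Union>x\<in>?I. {Q \<in> \<T>. x \<in> Q}"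
  let ?avoiding = "{Q \<in> \<T>. Q \<inter> ?I = {}}"
  have fin: "finite X1" "finite X2" "finite ?I" using finite_member X1 X2 by auto
  have split: "\<T> = ?through \<union> ?avoiding" by blast
  have "card ?through \<le> (\<Sum>x\<in>?I. card {Q \<in> \<T>. x \<in> Q})" by (rule card_UN_le[OF fin(3)])
  also have "\<dots> \<le> card ?I * (m + 1)"
    using sum_bounded_above[of ?I "\<lambda>x. card {Q \<in> \<T>. x \<in> Q}" "m + 1"] card_pair_transversals_through_le
    by simp
  finally have through: "finite ?through" "card ?through \<le> card ?I * (m + 1)"
    using fin(3) card_pair_transversals_through_le by auto
  let ?pairs = "(\<lambda>(x, y). {x, y}) ` ((X1 - X2) \<times> (X2 - X1))"
  have fin_pairs: "finite ?pairs" using fin by simp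
  have sub: "?avoiding \<subseteq> ?pairs" by (rule pair_transversals_avoiding_subset[OF X1 X2])
  have "card ?avoiding \<le> card ?pairs" by (rule card_mono[OF fin_pairs sub])
  also have "\<dots> \<le> card (X1 - X2) * card (X2 - X1)"
    using card_image_le[of "(X1 - X2) \<times> (X2 - X1)"] fin by (simp add: card_cartesian_product)
  finally have avoiding: "finite ?avoiding" "card ?avoiding \<le> card (X1 - X2) * card (X2 - X1)"
    using finite_subset[OF sub fin_pairs] by auto
  have "finite \<T>"
    using finite_UnI[OF through(1) avoiding(1)] by (simp only: split[symmetric])
  moreover have "card \<T> \<le> card ?through + card ?avoiding"
    using card_Un_le[of ?through ?avoiding] by (simp only: split[symmetric])
  ultimately show ?thesis using through(2) avoiding(2) by linarith
qed

lemma finite_pair_transversals: "finite \<T>"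
  using exists_two_members card_pair_transversals_le_Int_Diff by blast

lemma card_pair_transversals_defect_le:
  assumes X1: "X1 \<in> \<X>" and X2: "X2 \<in> \<X>" and "X1 \<noteq> X2"
  shows "card \<T> + (card (X1 \<inter> X2) - 1) * (card (X1 - X2) - 1) \<le> m * (m + 1) + 1"
proof -
  define i where "i = card (X1 \<inter> X2)"
  define j where "j = card (X1 - X2)"
  have fin: "finite X1" "finite X2" using finite_member X1 X2 by auto
  have "card (X1 - X2) = card X1 - i" "card (X2 - X1) = card X2 - i" "i \<le> card X1"
    using card_Diff_subset_Int[of X1 X2] card_Diff_subset_Int[of X2 X1] card_mono[of X1 "X1 \<inter> X2"] fin
    unfolding i_def by (auto simp: Int_commute)
  then have ij: "i + j = m + 1" "card (X2 - X1) = j"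
    using card_member X1 X2 unfolding j_def by auto
  have "i \<noteq> 0" using intersecting[OF X1 X2] fin unfolding i_def by simp
  moreover have "j \<noteq> 0"
  proof
    assume "j = 0"
    then have "X1 \<subseteq> X2" using fin unfolding j_def by simp
    then show False using member_subset_imp_eq X1 X2 \<open>X1 \<noteq> X2\<close> by blast
  qed
  ultimately obtain a b where ab: "i = Suc a" "j = Suc b" by (metis not0_implies_Suc)
  then have "m = a + b + 1" using ij by simp
  then have "i * (m + 1) + j * j + (i - 1) * (j - 1) = m * (m + 1) + 1"
    using ab by (simp add: algebra_simps)
  then show ?thesis
    using card_pair_transversals_le_Int_Diff[OF X1 X2] ij unfolding i_def j_def by simp
qed

lemma card_pair_transversals_le: "card \<T> \<le> m * (m + 1) + 1"
  using exists_two_members card_pair_transversals_defect_le by fastforce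

lemma pair_transversal_subset_Un:
  assumes diff: "\<And>X X'. X \<in> \<X> \<Longrightarrow> X' \<in> \<X> \<Longrightarrow> X \<noteq> X' \<Longrightarrow> card (X - X') = 1"
    and X1: "X1 \<in> \<X>" and X2: "X2 \<in> \<X>" and "X1 \<noteq> X2" and Q: "Q \<in> \<T>"
  shows "Q \<subseteq> X1 \<union> X2"
proof
  fix z assume z: "z \<in> Q"
  show "z \<in> X1 \<union> X2"
  proof (rule ccontr)
    assume zY: "z \<notin> X1 \<union> X2"
    obtain x1 where x1: "x1 \<in> X1" "Q = {z, x1}" using pair_transversal_eq[OF Q z X1] zY by blast
    obtain x2 where x2: "x2 \<in> X2" "Q = {z, x2}" using pair_transversal_eq[OF Q z X2] zY by blast
    have "x1 = x2" using x1 x2 zY by (auto simp: doubleton_eq_iff)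
    then have x: "x1 \<in> X1" "x1 \<in> X2" "x1 \<in> Q" using x1 x2 by auto
    obtain X3 where X3: "X3 \<in> \<X>" "x1 \<notin> X3" using exists_member_avoiding by blast
    obtain y where "y \<in> X3" "Q = {x1, y}" using pair_transversal_eq[OF Q x(3) X3] by blast
    then have zX3: "z \<in> X3" using x1 z zY by auto
    have "X1 - X3 = {x1}" "X2 - X3 = {x1}"
      using diff[OF X1 X3(1)] diff[OF X2 X3(1)] x X3 by (metis DiffI card_1_singletonE singletonD)+
    then have X3_sup: "X1 - {x1} \<subseteq> X3" "X2 - {x1} \<subseteq> X3" by blast+
    obtain w where w: "w \<in> X2" "w \<notin> X1"
      using member_subset_imp_eq[OF X2 X1] \<open>X1 \<noteq> X2\<close> by blast
    let ?S = "insert z (insert w (X1 - {x1}))"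
    have "?S \<subseteq> X3" using X3_sup zX3 w x by blast
    then have "card ?S \<le> card X3" by (rule card_mono[OF finite_member[OF X3(1)]])
    moreover have "card ?S = m + 2"
    proof -
      have "z \<noteq> w" using w zY by blast
      then show ?thesis
        using finite_member[OF X1] card_member[OF X1] x(1) w zY by (simp add: card_Diff_singleton)
    qed
    ultimately show False using card_member[OF X3(1)] by simp
  qed
qed

lemma card_pair_transversals_lt_if_card_Diff_eq_1:
  assumes "2 \<le> m"
    and diff: "\<And>X X'. X \<in> \<X> \<Longrightarrow> X' \<in> \<X> \<Longrightarrow> X \<noteq> X' \<Longrightarrow> card (X - X') = 1"
  shows "card \<T> < m * (m + 1) + 1"
proof -
  obtain X1 X2 where X: "X1 \<in> \<X>" "X2 \<in> \<X>" "X1 \<noteq> X2" using exists_two_members by blast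
  have fin: "finite X1" "finite X2" using finite_member X by auto
  have "card (X1 - X2) = card X1 - card (X1 \<inter> X2)" "card (X1 \<inter> X2) \<le> card X1"
    using card_Diff_subset_Int[of X1 X2] card_mono[of X1 "X1 \<inter> X2"] fin by auto
  then have "card (X1 \<inter> X2) = m" using diff[OF X] card_member[OF X(1)] by simp
  then have "card (X1 \<union> X2) = m + 2"
    using card_Un_Int[OF fin] card_member X(1,2) by simp
  moreover have "\<T> \<subseteq> {Q. Q \<subseteq> X1 \<union> X2 \<and> card Q = 2}"
    using pair_transversal_subset_Un[OF diff X] unfolding pair_transversals_def by blast
  ultimately show ?thesis using card_two_subsets_lt[of "X1 \<union> X2" m] fin assms(1) by simp
qed

lemma member_contains_Diff:
  assumes cross: "\<And>x y. x \<in> X1 - X2 \<Longrightarrow> y \<in> X2 - X1 \<Longrightarrow> {x, y} \<in> \<T>" and E: "E \<in> \<X>"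
  shows "X1 - X2 \<subseteq> E \<or> X2 - X1 \<subseteq> E"
proof (rule ccontr)
  assume "\<not> ?thesis"
  then obtain x y where x: "x \<in> X1 - X2" "x \<notin> E" and y: "y \<in> X2 - X1" "y \<notin> E" by blast
  have "{x, y} \<inter> E \<noteq> {}" using cross[OF x(1) y(1)] E unfolding pair_transversals_def by blast
  then show False using x(2) y(2) by blast
qed

lemma card_Diff_eq_if_Int_singleton:
  assumes "X1 \<in> \<X>" "X2 \<in> \<X>" "X1 \<inter> X2 = {p}"
  shows "card (X1 - X2) = m"
  using card_Diff_subset_Int[of X1 X2] finite_member card_member assms by simp

lemma extremal_pair_transversals:
  assumes extremal: "card \<T> = m * (m + 1) + 1"
    and X: "X1 \<in> \<X>" "X2 \<in> \<X>" "X3 \<in> \<X>" and p: "X1 \<inter> X2 = {p}" "p \<notin> X3"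
  shows "(\<lambda>y. {p, y}) ` X3 \<subseteq> \<T>" "(\<lambda>(x, y). {x, y}) ` ((X1 - X2) \<times> (X2 - X1)) \<subseteq> \<T>"
proof -
  let ?through = "{Q \<in> \<T>. p \<in> Q}"
  let ?avoiding = "{Q \<in> \<T>. Q \<inter> (X1 \<inter> X2) = {}}"
  let ?star = "(\<lambda>y. {p, y}) ` X3"
  let ?cross = "(\<lambda>(x, y). {x, y}) ` ((X1 - X2) \<times> (X2 - X1))"
  have fin: "finite X1" "finite X2" "finite X3" using finite_member X by auto
  have "X2 \<inter> X1 = {p}" using p(1) by blast
  then have "card (X1 - X2) = m" "card (X2 - X1) = m"
    using card_Diff_eq_if_Int_singleton X(1,2) p(1) by blast+
  then have "card ?cross \<le> m * m"
    using card_image_le[of "(X1 - X2) \<times> (X2 - X1)"] fin by (simp add: card_cartesian_product)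
  moreover have "card ?star \<le> m + 1"
    using card_image_le[OF fin(3)] card_member[OF X(3)] by simp
  moreover have through_sub: "?through \<subseteq> ?star"
    by (rule pair_transversals_through_subset[OF X(3) p(2)])
  moreover have avoiding_sub: "?avoiding \<subseteq> ?cross"
    by (rule pair_transversals_avoiding_subset[OF X(1,2)])
  moreover have fin_img: "finite ?star" "finite ?cross" using fin by simp_all
  moreover have "card \<T> = card ?through + card ?avoiding"
  proof -
    have "?through \<union> ?avoiding = \<T>" "?through \<inter> ?avoiding = {}"
      unfolding p(1) by auto
    then show ?thesis
      using card_Un_disjoint[of ?through ?avoiding] finite_pair_transversals by (simp add: finite_subset)
  qed
  \<comment> \<open>both counts are tight, since their bounds m + 1 and m * m already add up to card \<T>\<close>
  ultimately have "card ?star \<le> card ?through" "card ?cross \<le> card ?avoiding"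
    using extremal card_mono[OF fin_img(1) through_sub] card_mono[OF fin_img(2) avoiding_sub]
    by (simp_all add: algebra_simps)
  then have "?through = ?star" "?avoiding = ?cross"
    using card_seteq fin_img through_sub avoiding_sub by blast+
  then show "?star \<subseteq> \<T>" "?cross \<subseteq> \<T>" by blast+
qed

lemma member_eq_insert_if_Diff_subset:
  assumes X: "X1 \<in> \<X>" "X2 \<in> \<X>" "X3 \<in> \<X>" and p: "X1 \<inter> X2 = {p}" "p \<notin> X3"
    and X3_sup: "X2 - X1 \<subseteq> X3"
  obtains u where "u \<in> X1 - X2" "X3 = insert u (X2 - X1)"
proof -
  have "X2 \<inter> X1 = {p}" using p(1) by blast
  then have card_B: "card (X2 - X1) = m" using card_Diff_eq_if_Int_singleton X(1,2) by blast
  have fin: "finite (X2 - X1)" "finite X3" using finite_member X by auto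
  obtain u where u: "u \<in> X3" "u \<notin> X2 - X1"
    using card_mono[OF fin(1), of X3] card_B card_member[OF X(3)] by fastforce
  have "insert u (X2 - X1) \<subseteq> X3" using u X3_sup by blast
  moreover have "card (insert u (X2 - X1)) = m + 1" using u(2) fin card_B by simp
  ultimately have X3_eq: "X3 = insert u (X2 - X1)"
    using card_seteq[OF fin(2), of "insert u (X2 - X1)"] card_member[OF X(3)] by simp
  have "X1 \<inter> X3 \<noteq> {}" by (rule intersecting[OF X(1,3)])
  then have "u \<in> X1" unfolding X3_eq by blast
  moreover have "u \<notin> X2"
  proof
    assume "u \<in> X2"
    with \<open>u \<in> X1\<close> have "u \<in> X1 \<inter> X2" by (rule IntI)
    then have "u = p" unfolding p(1) by simp
    with u(1) p(2) show False by simp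
  qed
  ultimately have "u \<in> X1 - X2" by (rule DiffI)
  then show ?thesis using X3_eq by (rule that)
qed

lemma family_eq_if_star_cross:
  assumes X: "X1 \<in> \<X>" "X2 \<in> \<X>" "X3 \<in> \<X>" and p: "X1 \<inter> X2 = {p}"
    and star: "\<And>y. y \<in> X3 \<Longrightarrow> {p, y} \<in> \<T>"
    and cross: "\<And>x y. x \<in> X1 - X2 \<Longrightarrow> y \<in> X2 - X1 \<Longrightarrow> {x, y} \<in> \<T>"
  shows "\<X> = {X1, X2, X3}"
proof -
  have "E \<in> {X1, X2, X3}" if E: "E \<in> \<X>" for E
  proof (cases "p \<in> E")
    case True
    have "X1 \<subseteq> insert p (X1 - X2)" "X2 \<subseteq> insert p (X2 - X1)" using p by auto
    then have "X1 \<subseteq> E \<or> X2 \<subseteq> E" using member_contains_Diff[OF cross E] True by blast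
    then show ?thesis using member_subset_imp_eq[OF X(1) E] member_subset_imp_eq[OF X(2) E] by blast
  next
    case False
    have "y \<in> E" if "y \<in> X3" for y
      using star[OF that] E False unfolding pair_transversals_def by blast
    then show ?thesis using member_subset_imp_eq[OF X(3) E] by blast
  qed
  then show ?thesis using X by blast
qed

lemma extremal_family_eq:
  assumes X: "X1 \<in> \<X>" "X2 \<in> \<X>" "X3 \<in> \<X>" and p: "X1 \<inter> X2 = {p}" "p \<notin> X3"
    and X3_sup: "X2 - X1 \<subseteq> X3"
    and star: "\<And>y. y \<in> X3 \<Longrightarrow> {p, y} \<in> \<T>"
    and cross: "\<And>x y. x \<in> X1 - X2 \<Longrightarrow> y \<in> X2 - X1 \<Longrightarrow> {x, y} \<in> \<T>"
  shows "\<exists>p B C u. p \<notin> B \<and> p \<notin> C \<and> B \<inter> C = {} \<and> card B = m \<and> card C = m \<and> u \<in> C \<and>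
    \<X> = {insert p B, insert p C, insert u B}"
proof -
  obtain u where u: "u \<in> X1 - X2" "X3 = insert u (X2 - X1)"
    using member_eq_insert_if_Diff_subset[OF X p X3_sup] .
  define B where "B = X2 - X1"
  define C where "C = X1 - X2"
  have "X1 = insert p C" "X2 = insert p B" "X3 = insert u B"
    using p(1) u(2) unfolding B_def C_def by auto
  then have "\<X> = {insert p B, insert p C, insert u B}"
    using family_eq_if_star_cross[OF X(1-3) p(1) star cross] by auto
  moreover have "X2 \<inter> X1 = {p}" using p(1) by blast
  then have "card B = m" "card C = m"
    using card_Diff_eq_if_Int_singleton X(1,2) p(1) unfolding B_def C_def by blast+
  moreover have "p \<notin> B" "p \<notin> C" "B \<inter> C = {}" "u \<in> C"
    using u(1) p(1) unfolding B_def C_def by auto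
  ultimately show ?thesis by blast
qed

lemma exists_members_Int_singleton:
  assumes "2 \<le> m" and extremal: "card \<T> = m * (m + 1) + 1"
  shows "\<exists>X1\<in>\<X>. \<exists>X2\<in>\<X>. card (X1 \<inter> X2) = 1"
proof (rule ccontr)
  assume none: "\<not> ?thesis"
  have "card (X - X') = 1" if X: "X \<in> \<X>" "X' \<in> \<X>" "X \<noteq> X'" for X X'
  proof -
    have "(card (X \<inter> X') - 1) * (card (X - X') - 1) = 0"
      using card_pair_transversals_defect_le[OF X] extremal by simp
    moreover have "card (X \<inter> X') \<noteq> 0" using intersecting[OF X(1,2)] finite_member X by simp
    moreover have "card (X \<inter> X') \<noteq> 1" using none X(1,2) by blast
    moreover have "card (X - X') \<noteq> 0"
      using member_subset_imp_eq[OF X(1,2)] X(3) finite_member X(1) by auto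
    ultimately show ?thesis by simp
  qed
  then show False using card_pair_transversals_lt_if_card_Diff_eq_1 assms by fastforce
qed

lemma extremal_family_structure:
  assumes "2 \<le> m" and extremal: "card \<T> = m * (m + 1) + 1"
  shows "\<exists>p B C u. p \<notin> B \<and> p \<notin> C \<and> B \<inter> C = {} \<and> card B = m \<and> card C = m \<and> u \<in> C \<and>
    \<X> = {insert p B, insert p C, insert u B}"
proof -
  obtain X1 X2 p where X12: "X1 \<in> \<X>" "X2 \<in> \<X>" "X1 \<inter> X2 = {p}"
    using exists_members_Int_singleton[OF assms] by (metis card_1_singletonE)
  obtain X3 where X3: "X3 \<in> \<X>" "p \<notin> X3" using exists_member_avoiding by blast
  note tight = extremal_pair_transversals[OF extremal X12(1,2) X3(1) X12(3) X3(2)]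
  have star: "\<And>y. y \<in> X3 \<Longrightarrow> {p, y} \<in> \<T>" using tight(1) by blast
  have cross: "\<And>x y. x \<in> X1 - X2 \<Longrightarrow> y \<in> X2 - X1 \<Longrightarrow> {x, y} \<in> \<T>" using tight(2) by blast
  from member_contains_Diff[OF cross X3(1)] show ?thesis
  proof
    assume "X1 - X2 \<subseteq> X3"
    moreover have "X2 \<inter> X1 = {p}" using X12(3) by blast
    moreover have "{x, y} \<in> \<T>" if "x \<in> X2 - X1" "y \<in> X1 - X2" for x y
      using cross[OF that(2,1)] by (simp add: insert_commute)
    ultimately show ?thesis
      using extremal_family_eq[OF X12(2,1) X3(1) _ X3(2) _ star] by blast
  next
    assume "X2 - X1 \<subseteq> X3"
    then show ?thesis
      using extremal_family_eq[OF X12(1,2) X3(1) X12(3) X3(2) _ star cross] by blast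
  qed
qed

end

locale min_cover_kernel =
  fixes n k t :: nat and F :: "nat set set" and T :: "nat set"
  assumes uniform: "F \<subseteq> k_subsets n k"
    and intersecting: "t_intersecting t F"
    and tau: "tau n t F = t + 2"
    and T: "T \<in> k_subsets n t"
    and T_subset_min_covers: "\<forall>S \<in> min_covers n t F. T \<subseteq> S"
begin

abbreviation "\<G> \<equiv> F - star F T"
abbreviation "\<P> \<equiv> (\<lambda>S. S - T) ` min_covers n t F"

lemma member_outer_iff: "G \<in> \<G> \<longleftrightarrow> G \<in> F \<and> \<not> T \<subseteq> G"
  by (auto simp: star_def)

lemma member_props:
  assumes "G \<in> F" shows "G \<subseteq> {1..n}" "card G = k" "finite G"
proof -
  show G: "G \<subseteq> {1..n}" "card G = k" using uniform assms unfolding k_subsets_def by auto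
  show "finite G" using G(1) by (rule finite_subset) simp
qed

lemma card_inter_ge: "G \<in> F \<Longrightarrow> G' \<in> F \<Longrightarrow> t \<le> card (G \<inter> G')"
  using intersecting unfolding t_intersecting_def by blast

lemma T_props: "T \<subseteq> {1..n}" "card T = t" "finite T"
proof -
  show T': "T \<subseteq> {1..n}" "card T = t" using T unfolding k_subsets_def by auto
  show "finite T" using T'(1) by (rule finite_subset) simp
qed

lemma card_t_cover_ge: assumes "t_cover n t F S" shows "t + 2 \<le> card S"
proof -
  have "tau n t F \<le> card S" unfolding tau_def by (rule Least_le) (use assms in blast)
  then show ?thesis using tau by simp
qed

lemma min_cover_props:
  assumes "S \<in> min_covers n t F" shows "t_cover n t F S" "card S = t + 2" "T \<subseteq> S"
  using assms T_subset_min_covers tau by (auto simp: min_covers_def)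

lemma card_traces_min_covers: "card \<P> = card (min_covers n t F)"
proof (rule card_image, rule inj_onI)
  fix S S' assume "S \<in> min_covers n t F" "S' \<in> min_covers n t F" "S - T = S' - T"
  then show "S = S'" using min_cover_props(3)[of S] min_cover_props(3)[of S'] by blast
qed

lemma trace_min_cover_props:
  assumes "Q \<in> \<P>"
  shows "card Q = 2" "Q \<inter> T = {}" "\<And>G. G \<in> F \<Longrightarrow> t \<le> card (T \<inter> G) + card (Q \<inter> G)"
proof -
  obtain S where S: "S \<in> min_covers n t F" "Q = S - T" using assms by blast
  have "card Q = card S - card T"
    unfolding S(2) by (rule card_Diff_subset[OF T_props(3) min_cover_props(3)[OF S(1)]])
  then show "card Q = 2" using min_cover_props(2)[OF S(1)] T_props(2) by simp
  show "Q \<inter> T = {}" using S by auto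
  fix G assume G: "G \<in> F"
  have "t \<le> card (S \<inter> G)" using min_cover_props(1)[OF S(1)] G by (simp add: t_cover_def)
  also have "S \<inter> G = (T \<inter> G) \<union> (Q \<inter> G)" using S min_cover_props(3)[OF S(1)] by blast
  also have "card \<dots> \<le> card (T \<inter> G) + card (Q \<inter> G)" by (rule card_Un_le)
  finally show "t \<le> card (T \<inter> G) + card (Q \<inter> G)" .
qed

lemma outer_nonempty: "\<G> \<noteq> {}"
proof
  assume "\<G> = {}"
  then have "T \<subseteq> G" if "G \<in> F" for G using that member_outer_iff by blast
  then have "t_cover n t F T" using T_props unfolding t_cover_def by (simp add: Int_absorb2)
  from card_t_cover_ge[OF this] T_props(2) show False by simp
qed

lemma card_T_inter_outer_lt: assumes "G \<in> \<G>" shows "card (T \<inter> G) < t"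
proof (rule ccontr)
  assume "\<not> card (T \<inter> G) < t"
  then have "T \<inter> G = T" using card_seteq[OF T_props(3), of "T \<inter> G"] T_props(2) by auto
  then show False using assms member_outer_iff by blast
qed

lemma card_Diff_T: "G \<in> F \<Longrightarrow> card (G - T) = k - card (T \<inter> G)"
  using card_Diff_subset_Int[of G T] member_props by (simp add: Int_commute)

lemma card_traces_min_covers_lt_if_T_inter_small:
  assumes "t + 3 \<le> k" and G0: "G0 \<in> \<G>" and small: "card (T \<inter> G0) + 1 < t"
  shows "card \<P> < (k - t) * (k - t + 1) + 1"
proof (cases "\<P> = {}")
  case False
  then obtain Q0 where Q0: "Q0 \<in> \<P>" by blast
  have G0F: "G0 \<in> F" using G0 by simp
  have "Q \<subseteq> G0 - T" if Q: "Q \<in> \<P>" for Q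
  proof -
    have "2 \<le> card (Q \<inter> G0)" using trace_min_cover_props(3)[OF Q G0F] small by linarith
    moreover have "finite Q" using trace_min_cover_props(1)[OF Q] by (intro card_ge_0_finite) simp
    ultimately have "Q \<inter> G0 = Q"
      using card_seteq[of Q "Q \<inter> G0"] trace_min_cover_props(1)[OF Q] by auto
    then show ?thesis using trace_min_cover_props(2)[OF Q] by blast
  qed
  then have "\<P> \<subseteq> {Q. Q \<subseteq> G0 - T \<and> card Q = 2}" using trace_min_cover_props(1) by blast
  moreover have "card (G0 - T) \<le> k - t + 2"
  proof -
    have "finite Q0" using trace_min_cover_props(1)[OF Q0] by (intro card_ge_0_finite) simp
    then have "card (Q0 \<inter> G0) \<le> 2"
      using card_mono[of Q0 "Q0 \<inter> G0"] trace_min_cover_props(1)[OF Q0] by auto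
    then show ?thesis using trace_min_cover_props(3)[OF Q0 G0F] card_Diff_T[OF G0F] by linarith
  qed
  ultimately show ?thesis
    using card_two_subsets_lt[of "G0 - T" "k - t"] member_props(3)[OF G0F] assms(1) by simp
qed simp

end

locale shallow_min_cover_kernel = min_cover_kernel +
  assumes outer_T_inter_ge: "G \<in> F - star F T \<Longrightarrow> t \<le> card (T \<inter> G) + 1"
begin

abbreviation "\<X> \<equiv> (\<lambda>G. G - T) ` \<G>"

lemma card_T_inter_outer: "G \<in> \<G> \<Longrightarrow> card (T \<inter> G) + 1 = t"
  using outer_T_inter_ge card_T_inter_outer_lt by force

lemma card_trace_outer: assumes "G \<in> \<G>" shows "card (G - T) = k - t + 1"
proof -
  have "t \<le> k" using card_inter_ge[of G G] member_props(2) assms by simp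
  then show ?thesis using card_Diff_T card_T_inter_outer assms by force
qed

lemma traces_outer_intersect:
  assumes G: "G \<in> \<G>" and G': "G' \<in> \<G>" shows "(G - T) \<inter> (G' - T) \<noteq> {}"
proof
  assume disjoint: "(G - T) \<inter> (G' - T) = {}"
  have "t \<le> card (G \<inter> G')" using card_inter_ge G G' by simp
  also have "\<dots> \<le> card (T \<inter> G)"
    using disjoint by (intro card_mono) (use T_props(3) in auto)
  finally show False using card_T_inter_outer[OF G] by simp
qed

lemma Inter_traces_outer_empty: "\<Inter>\<X> = {}"
proof (rule ccontr)
  assume "\<Inter>\<X> \<noteq> {}"
  then obtain x where x: "\<And>G. G \<in> \<G> \<Longrightarrow> x \<in> G - T" by blast
  obtain G0 where "G0 \<in> \<G>" using outer_nonempty by blast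
  then have x_range: "x \<in> {1..n}" "x \<notin> T" using x member_props(1) by blast+
  have "t_cover n t F (insert x T)" unfolding t_cover_def
  proof (intro conjI ballI)
    show "insert x T \<subseteq> {1..n}" using x_range T_props by auto
    fix G assume GF: "G \<in> F"
    show "t \<le> card (insert x T \<inter> G)"
    proof (cases "T \<subseteq> G")
      case True
      then have "T \<subseteq> insert x T \<inter> G" by blast
      then show ?thesis using card_mono[of "insert x T \<inter> G" T] T_props by simp
    next
      case False
      then have G: "G \<in> \<G>" using GF member_outer_iff by blast
      then have "insert x T \<inter> G = insert x (T \<inter> G)" using x by blast
      then show ?thesis using card_T_inter_outer[OF G] x_range(2) T_props(3) by simp
    qed
  qed
  from card_t_cover_ge[OF this] show False using x_range T_props by simp
qed

lemma uniform_intersecting_family_traces_outer: "uniform_intersecting_family \<X> (k - t)"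
  by unfold_locales (use card_trace_outer traces_outer_intersect Inter_traces_outer_empty in auto)

lemma traces_min_covers_subset: "\<P> \<subseteq> pair_transversals \<X>"
proof
  fix Q assume Q: "Q \<in> \<P>"
  have "Q \<inter> (G - T) \<noteq> {}" if G: "G \<in> \<G>" for G
  proof -
    have "t \<le> card (T \<inter> G) + card (Q \<inter> G)" using trace_min_cover_props(3)[OF Q] G by simp
    then have "Q \<inter> G \<noteq> {}" using card_T_inter_outer[OF G] by auto
    then show ?thesis using trace_min_cover_props(2)[OF Q] by blast
  qed
  then show "Q \<in> pair_transversals \<X>"
    using trace_min_cover_props(1)[OF Q] unfolding pair_transversals_def by blast
qed

lemma T_inter_eq_if_card_traces_inter_le_1:
  assumes G: "G \<in> \<G>" and G': "G' \<in> \<G>" and small: "card ((G - T) \<inter> (G' - T)) \<le> 1"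
  shows "T \<inter> G = T \<inter> G'"
proof -
  have "t \<le> card (G \<inter> G')" using card_inter_ge G G' by simp
  also have "G \<inter> G' = (T \<inter> G \<inter> G') \<union> ((G - T) \<inter> (G' - T))" by blast
  also have "card \<dots> \<le> card (T \<inter> G \<inter> G') + card ((G - T) \<inter> (G' - T))" by (rule card_Un_le)
  finally have "t \<le> card (T \<inter> G \<inter> G') + 1" using small by linarith
  then have "T \<inter> G \<inter> G' = T \<inter> G" "T \<inter> G \<inter> G' = T \<inter> G'"
    using card_seteq[of "T \<inter> G" "T \<inter> G \<inter> G'"] card_seteq[of "T \<inter> G'" "T \<inter> G \<inter> G'"]
      card_T_inter_outer[OF G] card_T_inter_outer[OF G'] T_props(3) by (auto simp: Int_ac)
  then show ?thesis by simp
qed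

lemma trace_outer_range: "X \<in> \<X> \<Longrightarrow> X \<subseteq> {1..n} \<and> X \<inter> T = {}"
  using member_props(1) by blast

lemma outer_eq_image_traces:
  assumes "\<And>G. G \<in> \<G> \<Longrightarrow> T \<inter> G = T0"
  shows "\<G> = (\<lambda>X. T0 \<union> X) ` \<X>"
proof
  have decompose: "G = T0 \<union> (G - T)" if "G \<in> \<G>" for G using assms[OF that] by blast
  show "\<G> \<subseteq> (\<lambda>X. T0 \<union> X) ` \<X>"
  proof
    fix G assume G: "G \<in> \<G>"
    show "G \<in> (\<lambda>X. T0 \<union> X) ` \<X>"
      by (rule image_eqI[of _ _ "G - T"]) (use decompose[OF G] G in auto)
  qed
  show "(\<lambda>X. T0 \<union> X) ` \<X> \<subseteq> \<G>" using decompose by auto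
qed

lemma T_inter_outer_const_if_traces_eq:
  assumes traces: "\<X> = {insert p B, insert p C, insert u B}"
    and config: "p \<notin> B" "p \<notin> C" "B \<inter> C = {}" "u \<in> C"
  obtains T0 where "T0 \<subseteq> T" "card T0 + 1 = t" "\<And>G. G \<in> \<G> \<Longrightarrow> T \<inter> G = T0"
proof -
  have "insert p B \<in> \<X>" "insert p C \<in> \<X>" "insert u B \<in> \<X>" unfolding traces by simp_all
  then obtain G1 G2 G3 where G: "G1 \<in> \<G>" "G2 \<in> \<G>" "G3 \<in> \<G>"
    and traces_G: "G1 - T = insert p B" "G2 - T = insert p C" "G3 - T = insert u B"
    by (elim imageE) (rule that, assumption+, simp_all)
  have singletons: "insert p B \<inter> insert p C = {p}" "insert p C \<inter> insert u B = {u}"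
    "insert u B \<inter> insert p C = {u}"
    using config by auto
  have meet: "card (insert p B \<inter> insert p C) \<le> 1" "card (insert p C \<inter> insert u B) \<le> 1"
    "card (insert u B \<inter> insert p C) \<le> 1"
    unfolding singletons by simp_all
  \<comment> \<open>the trace of G2 meets the other two traces in one point each\<close>
  have "T \<inter> G = T \<inter> G2" if "G \<in> \<G>" for G
  proof -
    have "G - T \<in> {insert p B, insert p C, insert u B}" using that unfolding traces[symmetric] by blast
    then consider "G - T = insert p B" | "G - T = insert p C" | "G - T = insert u B" by blast
    then show ?thesis
    proof cases
      case 1
      then show ?thesis using T_inter_eq_if_card_traces_inter_le_1[OF that G(2)] meet(1) traces_G by simp
    next
      case 2
      then have "T \<inter> G = T \<inter> G3" "T \<inter> G2 = T \<inter> G3"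
        using T_inter_eq_if_card_traces_inter_le_1 that G meet(2) traces_G by simp_all
      then show ?thesis by simp
    next
      case 3
      then show ?thesis using T_inter_eq_if_card_traces_inter_le_1[OF that G(2)] meet(3) traces_G by simp
    qed
  qed
  moreover have "T \<inter> G2 \<subseteq> T" "card (T \<inter> G2) + 1 = t" using card_T_inter_outer[OF G(2)] by auto
  ultimately show ?thesis using that by blast
qed

lemma outer_eq_if_traces_eq:
  assumes traces: "\<X> = {insert p B, insert p C, insert u B}"
    and config: "p \<notin> B" "p \<notin> C" "B \<inter> C = {}" "card B = k - t" "card C = k - t" "u \<in> C"
  shows "\<exists>A B C u. A \<subseteq> {1..n} \<and> B \<subseteq> {1..n} \<and> C \<subseteq> {1..n} \<and>
           A \<inter> B = {} \<and> A \<inter> C = {} \<and> B \<inter> C = {} \<and>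
           card A = t \<and> card B = k - t \<and> card C = k - t \<and>
           card (T \<inter> A) + 1 = t \<and> T \<inter> (B \<union> C) = {} \<and> u \<in> C \<and>
           F - star F T = {A \<union> B, A \<union> C, (T \<inter> A) \<union> B \<union> {u}}"
proof -
  obtain T0 where T0: "T0 \<subseteq> T" "card T0 + 1 = t" "\<And>G. G \<in> \<G> \<Longrightarrow> T \<inter> G = T0"
    using T_inter_outer_const_if_traces_eq[OF traces config(1-3,6)] by blast
  have outer: "\<G> = {T0 \<union> insert p B, T0 \<union> insert p C, T0 \<union> insert u B}"
    using outer_eq_image_traces[OF T0(3)] unfolding traces by simp
  have "insert p B \<in> \<X>" "insert p C \<in> \<X>" unfolding traces by simp_all
  then have trace_range: "insert p (B \<union> C) \<subseteq> {1..n}" "insert p (B \<union> C) \<inter> T = {}"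
    using trace_outer_range by blast+
  define A where "A = insert p T0"
  have TA: "T \<inter> A = T0" using T0(1) trace_range(2) unfolding A_def by auto
  have "A \<subseteq> {1..n}" "B \<subseteq> {1..n}" "C \<subseteq> {1..n}"
    using trace_range(1) T0(1) T_props(1) unfolding A_def by auto
  moreover have "A \<inter> B = {}" "A \<inter> C = {}" "T \<inter> (B \<union> C) = {}"
    using trace_range(2) T0(1) config(1,2) unfolding A_def by auto
  moreover have "card A = t"
  proof -
    have "p \<notin> T0" using T0(1) trace_range(2) by blast
    then show ?thesis using T0(2) finite_subset[OF T0(1) T_props(3)] unfolding A_def by simp
  qed
  moreover have "card (T \<inter> A) + 1 = t" using TA T0(2) by simp
  moreover have "F - star F T = {A \<union> B, A \<union> C, T \<inter> A \<union> B \<union> {u}}"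
    unfolding outer TA unfolding A_def by simp
  ultimately show ?thesis using config(3-6) by blast
qed

lemma card_traces_min_covers_le_card_pair_transversals:
  "card \<P> \<le> card (pair_transversals \<X>)"
  using card_mono[OF uniform_intersecting_family.finite_pair_transversals traces_min_covers_subset]
    uniform_intersecting_family_traces_outer by blast

lemma card_traces_min_covers_le: "card \<P> \<le> (k - t) * (k - t + 1) + 1"
  using card_traces_min_covers_le_card_pair_transversals
    uniform_intersecting_family.card_pair_transversals_le[OF uniform_intersecting_family_traces_outer]
  by (rule order_trans)

lemma outer_eq_if_card_traces_min_covers_eq:
  assumes "t + 3 \<le> k" and "card \<P> = (k - t) * (k - t + 1) + 1"
  shows "\<exists>A B C u. A \<subseteq> {1..n} \<and> B \<subseteq> {1..n} \<and> C \<subseteq> {1..n} \<and>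
           A \<inter> B = {} \<and> A \<inter> C = {} \<and> B \<inter> C = {} \<and>
           card A = t \<and> card B = k - t \<and> card C = k - t \<and>
           card (T \<inter> A) + 1 = t \<and> T \<inter> (B \<union> C) = {} \<and> u \<in> C \<and>
           F - star F T = {A \<union> B, A \<union> C, (T \<inter> A) \<union> B \<union> {u}}"
proof -
  interpret traces: uniform_intersecting_family \<X> "k - t"
    by (rule uniform_intersecting_family_traces_outer)
  have "2 \<le> k - t" using assms(1) by simp
  moreover have "card (pair_transversals \<X>) = (k - t) * (k - t + 1) + 1"
    using assms(2) card_traces_min_covers_le_card_pair_transversals traces.card_pair_transversals_le
    by simp
  ultimately have "\<exists>p B C u. p \<notin> B \<and> p \<notin> C \<and> B \<inter> C = {} \<and> card B = k - t \<and> card C = k - t \<and>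
    u \<in> C \<and> \<X> = {insert p B, insert p C, insert u B}"
    by (rule traces.extremal_family_structure)
  then show ?thesis by (elim exE conjE) (rule outer_eq_if_traces_eq; assumption)
qed

end

theorem proposition2p2:
  fixes n k t :: nat and \<F> :: "nat set set" and T :: "nat set"
  assumes "n > 2 * k"
    and "k \<ge> t + 3"
    and "maximal_t_intersecting n k t \<F>"
    and "tau n t \<F> = t + 2"
    and "T \<in> k_subsets n t"
    and "\<forall>S \<in> min_covers n t \<F>. T \<subseteq> S"
  shows "card (min_covers n t \<F>) \<le> (k - t) * (k - t + 1) + 1
    \<and> (card (min_covers n t \<F>) = (k - t) * (k - t + 1) + 1 \<longrightarrow>
        (\<exists>A B C u. A \<subseteq> {1..n} \<and> B \<subseteq> {1..n} \<and> C \<subseteq> {1..n} \<and>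
           A \<inter> B = {} \<and> A \<inter> C = {} \<and> B \<inter> C = {} \<and>
           card A = t \<and> card B = k - t \<and> card C = k - t \<and>
           card (T \<inter> A) + 1 = t \<and> T \<inter> (B \<union> C) = {} \<and> u \<in> C \<and>
           \<F> - star \<F> T = {A \<union> B, A \<union> C, (T \<inter> A) \<union> B \<union> {u}}))"
proof -
  interpret min_cover_kernel n k t \<F> T
    using assms(3-6) by unfold_locales (auto simp: maximal_t_intersecting_def)
  have card_eq: "card (min_covers n t \<F>) = card \<P>" by (rule card_traces_min_covers[symmetric])
  show ?thesis
  proof (cases "\<exists>G0 \<in> \<F> - star \<F> T. card (T \<inter> G0) + 1 < t")
    case True
    then obtain G0 where "G0 \<in> \<F> - star \<F> T" "card (T \<inter> G0) + 1 < t" by blast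
    then have "card \<P> < (k - t) * (k - t + 1) + 1"
      by (rule card_traces_min_covers_lt_if_T_inter_small[OF assms(2)])
    then show ?thesis using card_eq by simp
  next
    case False
    interpret shallow_min_cover_kernel n k t \<F> T by unfold_locales (use False in force)
    show ?thesis
      using card_traces_min_covers_le outer_eq_if_card_traces_min_covers_eq[OF assms(2)] card_eq by simp
  qed
qed

end
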